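(* Let $X_0$ and $(X_t(a_{1:t}):t\in\{1,\dots,T\},a_{1:t}\in\mathcal{A}_{1:t})$ be potential outcomes with $X_t(a_{1:t})\in\mathcal{X}_t$, let $A_{1:T}$ be random actions with $A_t\in\mathcal{A}_t$, and let $(Y(a_{1:t}):a_{1:t}\in\mathcal{A}_{1:t})$ be real-valued potential outcomes defined jointly with these. Suppose for some $t\in\{1,\dots,T\}$, $a_{1:t}\in\mathcal{A}_{1:t}$, measurable $B_{0:t}=B_0\times\cdots\times B_t\subseteq\mathcal{X}_{0:t}$ and $\underline y,\overline y\in\mathbb{R}$ we have $\mathbb{P}(X_{0:t}(a_{1:t})\in B_{0:t})>0$ and $\mathbb{P}(\underline y\le Y(a_{1:t})\le\overline y\mid X_{0:t}(a_{1:t})\in B_{0:t})=1$. Let $N=\max\{0\le s\le t: A_{1:s}=a_{1:s}\}$ and $$\underline Y=\mathbb{1}(A_{1:t}=a_{1:t})Y(A_{1:t})+\mathbb{1}(A_{1:t}\ne a_{1:t})\underline y,\qquad\overline Y=\mathbb{1}(A_{1:t}=a_{1:t})Y(A_{1:t})+\mathbb{1}(A_{1:t}\ne a_{1:t})\overline y.$$ Then $$\mathbb{E}[\underline Y\mid X_{0:N}(A_{1:N})\in B_{0:N}]\le\mathbb{E}[Y(a_{1:t})\mid X_{0:t}(a_{1:t})\in B_{0:t}]\le\mathbb{E}[\overline Y\mid X_{0:N}(A_{1:N})\in B_{0:N}].$$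
   Context: Horizon $T\ge1$, $\mathcal{X}_t=\mathbb{R}^{d_t}$, finite action spaces $\mathcal{A}_t$; $z_{s:t}=(z_s,\dots,z_t)$ (empty if $s>t$), $\mathcal{X}_{0:t}=\mathcal{X}_0\times\cdots\times\mathcal{X}_t$, $X_{0:t}(a_{1:t})=(X_0,X_1(a_1),\dots,X_t(a_{1:t}))$. Quantities evaluated at the random actions, e.g. $X_{0:N}(A_{1:N})$ and $Y(A_{1:t})$, denote the potential outcome indexed by the realized actions; $X_{0:N}(A_{1:N})\in B_{0:N}$ means $X_s(A_{1:s})\in B_s$ for all $0\le s\le N$. No further causal assumptions (e.g. no unconfoundedness) are made. *)

theory Defs
  imports "HOL-Probability.Probability"
begin

definition cond_exp_event :: "'w measure \<Rightarrow> ('w \<Rightarrow> real) \<Rightarrow> 'w set \<Rightarrow> real" where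
  "cond_exp_event M Z E = (\<integral>\<omega>. indicator E \<omega> * Z \<omega> \<partial>M) / measure M E"

definition cond_prob_event :: "'w measure \<Rightarrow> 'w set \<Rightarrow> 'w set \<Rightarrow> real" where
  "cond_prob_event M F E = measure M (F \<inter> E) / measure M E"

text \<open>The state space X_t = R^{d_t}, as the Borel product measure on functions
  supported on {..<d_t}.\<close>
definition state_space :: "nat \<Rightarrow> (nat \<Rightarrow> real) measure" where
  "state_space n = PiM {..<n} (\<lambda>_. borel)"

end

theory Submission
  imports Defs
begin

(* Let E_a be the event that the potential history under a lies in B_{0:t}, E_N the event that
  the observed history cut at N lies in B_{0:N}, and G the event A_{1:t} = a_{1:t}.  Then E_a is
  contained in E_N, the two events coincide on G, and on G the observed outcome is Y(a_{1:t}).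
  Hence, compared with the integral of Y(a_{1:t}) over E_a, the integral of the lower imputation
  over E_N replaces Y by ylo on E_a - G and adds mass P(E_N) - P(E_a) at ylo.  As Y(a_{1:t}) >= ylo
  almost surely on E_a, both changes can only lower the conditional mean; symmetrically for yhi. *)

lemma cond_exp_event_cong:
  "(\<And>\<omega>. \<omega> \<in> space M \<Longrightarrow> f \<omega> = g \<omega>) \<Longrightarrow> cond_exp_event M f E = cond_exp_event M g E"
  unfolding cond_exp_event_def by (metis (mono_tags, lifting) Bochner_Integration.integral_cong)

lemma cond_exp_event_uminus: "cond_exp_event M (\<lambda>\<omega>. - f \<omega>) E = - cond_exp_event M f E"
  unfolding cond_exp_event_def by simp

lemma le_Max_prefix_iff:
  fixes P :: "nat \<Rightarrow> bool"
  assumes "P 0" and downward: "\<And>r s. r \<le> s \<Longrightarrow> P s \<Longrightarrow> P r"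
  shows "s \<le> Max {r. r \<le> t \<and> P r} \<longleftrightarrow> s \<le> t \<and> P s"
proof -
  define S where "S = {r. r \<le> t \<and> P r}"
  have "finite S" "0 \<in> S" using \<open>P 0\<close> unfolding S_def by auto
  then have "Max S \<in> S" by (intro Max_in) auto
  with \<open>finite S\<close> show ?thesis
    unfolding S_def[symmetric] by (auto simp: S_def intro: Max_ge downward)
qed

lemma pred_All_atMost:
  fixes P :: "nat \<Rightarrow> 'a \<Rightarrow> bool"
  assumes "\<And>s. s \<le> t \<Longrightarrow> Measurable.pred M (P s)"
  shows "Measurable.pred M (\<lambda>\<omega>. \<forall>s\<le>t. P s \<omega>)"
proof -
  have "Measurable.pred M (\<lambda>\<omega>. \<forall>s\<in>{..t}. P s \<omega>)"
    by (rule pred_intros_finite(3)) (use assms in auto)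
  then show ?thesis unfolding Ball_def atMost_iff .
qed

context prob_space
begin

lemma AE_of_cond_prob_event_eq_1:
  assumes E: "E \<in> events" and K: "K \<in> events" and pos: "prob E > 0"
    and one: "cond_prob_event M K E = 1"
  shows "AE \<omega> in M. \<omega> \<in> E \<longrightarrow> \<omega> \<in> K"
proof (rule AE_I[where N = "E - K"])
  have "prob (K \<inter> E) = prob E" using one pos by (simp add: cond_prob_event_def field_simps)
  then have "prob (E - K) = 0" using finite_measure_Diff'[OF E K] by (simp add: Int_commute)
  then show "emeasure M (E - K) = 0" by (simp add: emeasure_eq_measure)
qed (use E K in auto)

lemma integrable_indicator_mult_AE_bounded:
  fixes Y :: "'a \<Rightarrow> real"
  assumes "E \<in> events" and "Y \<in> borel_measurable M"
    and "AE \<omega> in M. \<omega> \<in> E \<longrightarrow> lo \<le> Y \<omega> \<and> Y \<omega> \<le> hi"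
  shows "integrable M (\<lambda>\<omega>. indicator E \<omega> * Y \<omega>)"
proof (rule integrable_const_bound[where B = "\<bar>lo\<bar> + \<bar>hi\<bar>"])
  show "AE \<omega> in M. norm (indicator E \<omega> * Y \<omega>) \<le> \<bar>lo\<bar> + \<bar>hi\<bar>"
    using assms(3) by eventually_elim (auto simp: indicator_def)
qed (use assms in measurable)

lemma cond_exp_event_imputed_le:
  fixes Y :: "'a \<Rightarrow> real"
  assumes E: "E \<in> events" and F: "F \<in> events" and G: "G \<in> events"
    and EF: "E \<subseteq> F" and FG: "F \<inter> G \<subseteq> E" and pos: "prob E > 0"
    and int: "integrable M (\<lambda>\<omega>. indicator E \<omega> * Y \<omega>)"
    and lo: "AE \<omega> in M. \<omega> \<in> E \<longrightarrow> lo \<le> Y \<omega>"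
  shows "cond_exp_event M (\<lambda>\<omega>. if \<omega> \<in> G then Y \<omega> else lo) F \<le> cond_exp_event M Y E"
proof -
  define J where "J = (\<integral>\<omega>. indicator E \<omega> * Y \<omega> \<partial>M)"
  have int_ind: "integrable M (indicator S :: 'a \<Rightarrow> real)" if "S \<in> events" for S
    using that by (simp add: emeasure_eq_measure)
  have J_ge: "lo * prob E \<le> J"
  proof -
    have "AE \<omega> in M. lo * indicator E \<omega> \<le> indicator E \<omega> * Y \<omega>"
      using lo by eventually_elim (auto simp: indicator_def)
    then have "(\<integral>\<omega>. lo * indicator E \<omega> \<partial>M) \<le> J"
      unfolding J_def using int int_ind[OF E] by (intro integral_mono_AE) auto
    then show ?thesis using E by simp
  qed
  have "(\<integral>\<omega>. indicator F \<omega> * (if \<omega> \<in> G then Y \<omega> else lo) \<partial>M)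
      = (\<integral>\<omega>. indicator G \<omega> * (indicator E \<omega> * Y \<omega>) + lo * indicator (F - G) \<omega> \<partial>M)"
    using EF FG by (intro Bochner_Integration.integral_cong) (auto simp: indicator_def)
  also have "\<dots> \<le> (\<integral>\<omega>. indicator E \<omega> * Y \<omega> + lo * indicator (F - E) \<omega> \<partial>M)"
  proof (rule integral_mono_AE)
    show "AE \<omega> in M. indicator G \<omega> * (indicator E \<omega> * Y \<omega>) + lo * indicator (F - G) \<omega>
        \<le> indicator E \<omega> * Y \<omega> + lo * indicator (F - E) \<omega>"
      using lo by eventually_elim (use EF FG in \<open>auto simp: indicator_def\<close>)
  qed (use int E F G int_ind integrable_mult_indicator[OF G int] in auto)
  also have "\<dots> = J + lo * (prob F - prob E)"
    using int int_ind[of "F - E"] E F EF by (simp add: J_def finite_measure_Diff)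
  finally have int_F: "(\<integral>\<omega>. indicator F \<omega> * (if \<omega> \<in> G then Y \<omega> else lo) \<partial>M)
      \<le> J + lo * (prob F - prob E)" .
  have prob_EF: "prob E \<le> prob F" using EF F by (intro finite_measure_mono)
  \<comment> \<open>the right-hand side of int_F over prob F is a convex combination of lo and J / prob E\<close>
  have "(J + lo * (prob F - prob E)) / prob F \<le> J / prob E"
    using mult_right_mono[OF J_ge, of "prob F - prob E"] pos prob_EF
    by (simp add: divide_simps) (simp add: algebra_simps)
  with int_F pos prob_EF show ?thesis
    unfolding cond_exp_event_def J_def[symmetric]
    by (meson divide_right_mono less_le_trans order_trans measure_nonneg)
qed

lemma cond_exp_event_imputed_ge:
  fixes Y :: "'a \<Rightarrow> real"
  assumes "E \<in> events" and "F \<in> events" and "G \<in> events"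
    and "E \<subseteq> F" and "F \<inter> G \<subseteq> E" and "prob E > 0"
    and "integrable M (\<lambda>\<omega>. indicator E \<omega> * Y \<omega>)"
    and "AE \<omega> in M. \<omega> \<in> E \<longrightarrow> Y \<omega> \<le> hi"
  shows "cond_exp_event M Y E \<le> cond_exp_event M (\<lambda>\<omega>. if \<omega> \<in> G then Y \<omega> else hi) F"
proof -
  have "cond_exp_event M (\<lambda>\<omega>. - (if \<omega> \<in> G then Y \<omega> else hi)) F
      \<le> cond_exp_event M (\<lambda>\<omega>. - Y \<omega>) E"
    using cond_exp_event_imputed_le[of E F G "\<lambda>\<omega>. - Y \<omega>" "- hi"] assms
    by (simp add: if_distrib)
  then show ?thesis by (simp add: cond_exp_event_uminus)
qed

end

theorem theorem4p4:
  fixes M :: "'w measure"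
    and T :: nat
    and d :: "nat \<Rightarrow> nat"
    and Act :: "nat \<Rightarrow> 'a set"
    and X :: "nat \<Rightarrow> (nat \<Rightarrow> 'a) \<Rightarrow> 'w \<Rightarrow> (nat \<Rightarrow> real)"
    and A :: "nat \<Rightarrow> 'w \<Rightarrow> 'a"
    and Y :: "nat \<Rightarrow> (nat \<Rightarrow> 'a) \<Rightarrow> 'w \<Rightarrow> real"
    and t :: nat
    and a :: "nat \<Rightarrow> 'a"
    and B :: "nat \<Rightarrow> (nat \<Rightarrow> real) set"
    and ylo yhi :: real
  assumes prob: "prob_space M"
    and T_pos: "T \<ge> 1"
    and Act_fin: "\<And>s. s \<in> {1..T} \<Longrightarrow> finite (Act s)"
    and Act_ne: "\<And>s. s \<in> {1..T} \<Longrightarrow> Act s \<noteq> {}"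
    and X_meas: "\<And>s b. s \<le> T \<Longrightarrow> (\<forall>i\<in>{1..s}. b i \<in> Act i) \<Longrightarrow>
                   X s b \<in> M \<rightarrow>\<^sub>M state_space (d s)"
    and X_dep: "\<And>s b b'. (\<forall>i\<in>{1..s}. b i = b' i) \<Longrightarrow> X s b = X s b'"
    and A_meas: "\<And>s. s \<in> {1..T} \<Longrightarrow> A s \<in> M \<rightarrow>\<^sub>M count_space UNIV"
    and A_val: "\<And>s \<omega>. s \<in> {1..T} \<Longrightarrow> \<omega> \<in> space M \<Longrightarrow> A s \<omega> \<in> Act s"
    and Y_meas: "\<And>s b. s \<in> {1..T} \<Longrightarrow> (\<forall>i\<in>{1..s}. b i \<in> Act i) \<Longrightarrow>
                   Y s b \<in> borel_measurable M"
    and Y_dep: "\<And>s b b'. (\<forall>i\<in>{1..s}. b i = b' i) \<Longrightarrow> Y s b = Y s b'"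
    and t_range: "t \<in> {1..T}"
    and a_range: "\<And>i. i \<in> {1..t} \<Longrightarrow> a i \<in> Act i"
    and B_meas: "\<And>s. s \<le> t \<Longrightarrow> B s \<in> sets (state_space (d s))"
    and pos: "measure M {\<omega> \<in> space M. \<forall>s\<le>t. X s a \<omega> \<in> B s} > 0"
    and bounded: "cond_prob_event M {\<omega> \<in> space M. ylo \<le> Y t a \<omega> \<and> Y t a \<omega> \<le> yhi}
                    {\<omega> \<in> space M. \<forall>s\<le>t. X s a \<omega> \<in> B s} = 1"
  shows
    "let N = (\<lambda>\<omega>. Max {s. s \<le> t \<and> (\<forall>i\<in>{1..s}. A i \<omega> = a i)});
         agree = (\<lambda>\<omega>. \<forall>i\<in>{1..t}. A i \<omega> = a i);
         Ylo = (\<lambda>\<omega>. (if agree \<omega> then Y t (\<lambda>i. A i \<omega>) \<omega> else ylo));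
         Yhi = (\<lambda>\<omega>. (if agree \<omega> then Y t (\<lambda>i. A i \<omega>) \<omega> else yhi));
         EN = {\<omega> \<in> space M. \<forall>s\<le>N \<omega>. X s (\<lambda>i. A i \<omega>) \<omega> \<in> B s};
         Ea = {\<omega> \<in> space M. \<forall>s\<le>t. X s a \<omega> \<in> B s}
     in cond_exp_event M Ylo EN \<le> cond_exp_event M (Y t a) Ea
        \<and> cond_exp_event M (Y t a) Ea \<le> cond_exp_event M Yhi EN"
proof -
  interpret prob_space M by (rule prob)
  define G where "G = {\<omega> \<in> space M. \<forall>i\<in>{1..t}. A i \<omega> = a i}"
  define Ea where "Ea = {\<omega> \<in> space M. \<forall>s\<le>t. X s a \<omega> \<in> B s}"
  define EN where "EN = {\<omega> \<in> space M. \<forall>s\<le>t. (\<forall>i\<in>{1..s}. A i \<omega> = a i) \<longrightarrow> X s a \<omega> \<in> B s}"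
  have agree_pred: "Measurable.pred M (\<lambda>\<omega>. \<forall>i\<in>{1..s}. A i \<omega> = a i)" if "s \<le> t" for s
    using that t_range A_meas by (intro pred_intros_finite(3)) auto
  have X_pred: "Measurable.pred M (\<lambda>\<omega>. X s a \<omega> \<in> B s)" if "s \<le> t" for s
    using that t_range a_range by (intro pred_sets2[OF B_meas X_meas]) auto
  have G: "G \<in> events"
    unfolding G_def by (rule agree_pred[OF order_refl, unfolded pred_def])
  have Ea: "Ea \<in> events"
    unfolding Ea_def by (rule pred_All_atMost[OF X_pred, unfolded pred_def])
  have EN: "EN \<in> events"
    unfolding EN_def
    by (rule pred_All_atMost[OF pred_intros_logic(4)[OF agree_pred X_pred], unfolded pred_def])
  have EN_eq: "{\<omega> \<in> space M. \<forall>s\<le>Max {s. s \<le> t \<and> (\<forall>i\<in>{1..s}. A i \<omega> = a i)}.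
      X s (\<lambda>i. A i \<omega>) \<omega> \<in> B s} = EN"
  proof -
    have "s \<le> Max {r. r \<le> t \<and> (\<forall>i\<in>{1..r}. A i \<omega> = a i)} \<longleftrightarrow> s \<le> t \<and> (\<forall>i\<in>{1..s}. A i \<omega> = a i)"
      for s \<omega> by (rule le_Max_prefix_iff) auto
    moreover have "X s (\<lambda>i. A i \<omega>) = X s a" if "\<forall>i\<in>{1..s}. A i \<omega> = a i" for s \<omega>
      using that by (intro X_dep) simp
    ultimately show ?thesis unfolding EN_def by auto
  qed
  have Y_agree: "Y t (\<lambda>i. A i \<omega>) = Y t a" if "\<forall>i\<in>{1..t}. A i \<omega> = a i" for \<omega>
    using that by (intro Y_dep) simp
  have imputed: "cond_exp_event M (\<lambda>\<omega>. if \<forall>i\<in>{1..t}. A i \<omega> = a i then Y t (\<lambda>i. A i \<omega>) \<omega> else c) EN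
      = cond_exp_event M (\<lambda>\<omega>. if \<omega> \<in> G then Y t a \<omega> else c) EN" for c
    unfolding G_def by (rule cond_exp_event_cong) (simp add: Y_agree)
  have Y_rv: "Y t a \<in> borel_measurable M" using Y_meas t_range a_range by auto
  have bounds: "AE \<omega> in M. \<omega> \<in> Ea \<longrightarrow> ylo \<le> Y t a \<omega> \<and> Y t a \<omega> \<le> yhi"
    using AE_of_cond_prob_event_eq_1[OF Ea _ pos[folded Ea_def] bounded[folded Ea_def]] Y_rv
    by (simp add: borel_measurable_le)
  have integrable: "integrable M (\<lambda>\<omega>. indicator Ea \<omega> * Y t a \<omega>)"
    by (rule integrable_indicator_mult_AE_bounded[OF Ea Y_rv bounds])
  have "Ea \<subseteq> EN" "EN \<inter> G \<subseteq> Ea" unfolding Ea_def EN_def G_def by auto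
  with G Ea EN pos integrable bounds show ?thesis
    unfolding Let_def EN_eq imputed Ea_def[symmetric]
    by (auto intro!: cond_exp_event_imputed_le cond_exp_event_imputed_ge)
qed

end
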